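(* Let $n\ge2$ and let $A=(a_{ij})\in\mathbb{R}^{n\times n}$ be pseudo-diagonalizable. (1) If $n=2$, then $A$ is separable if and only if $a_{11}+a_{22}=0$. (2) If $n\ge3$, then $A$ is separable if and only if $a_{ii}=0$ for all $i\in[n]$. (3) $A$ is an optimal-node matrix if and only if there exists $k\in[n]$ such that $a_{kk}\ge0$ and $a_{ii}\le0$ for all $i\in[n]$ with $i\ne k$.
   Context: Max-plus conventions: $\varepsilon=-\infty$, $\oplus=\max$, $\otimes=+$, $(A\otimes B)_{ij}=\max_t(A_{it}+B_{tj})$. A matrix $P\in\overline{\mathbb{R}}^{n\times n}$ is invertible iff it has exactly one real entry in each row and column (others $\varepsilon$); $A,B$ are similar if $B=P^{-1}\otimes A\otimes P$ for invertible $P$. A square matrix is pseudo-diagonal if its diagonal entries are real and off-diagonal entries equal the real number $0$; pseudo-diagonalizable means similar to a pseudo-diagonal matrix. A finite matrix $A=(a_{ij})$ is separable if there are reals $u_i,v_j$ with $a_{ij}=u_i+v_j$ for all $i,j$; it is an optimal-node matrix if there is $k\in[n]$ with $a_{ik}+a_{kj}\ge a_{il}+a_{lj}$ for all $i,j,l\in[n]$. *)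

theory Defs
  imports "HOL-Library.Extended_Real"
begin

text \<open>Max-plus matrices of size n x n, indexed by 0..n-1; entries in ereal,
  where -\<infinity> plays the role of epsilon (the value +\<infinity> is excluded where relevant).\<close>

type_synonym mpmat = "nat \<Rightarrow> nat \<Rightarrow> ereal"

definition mp_mult :: "nat \<Rightarrow> mpmat \<Rightarrow> mpmat \<Rightarrow> mpmat" where
  "mp_mult n A B = (\<lambda>i j. Max ((\<lambda>t. A i t + B t j) ` {..<n}))"

definition mp_id :: mpmat where
  "mp_id = (\<lambda>i j. if i = j then 0 else -\<infinity>)"

definition mp_mat_eq :: "nat \<Rightarrow> mpmat \<Rightarrow> mpmat \<Rightarrow> bool" where
  "mp_mat_eq n A B \<longleftrightarrow> (\<forall>i<n. \<forall>j<n. A i j = B i j)"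

definition mp_wf :: "nat \<Rightarrow> mpmat \<Rightarrow> bool" where
  "mp_wf n A \<longleftrightarrow> (\<forall>i<n. \<forall>j<n. A i j \<noteq> \<infinity>)"

definition mp_inverse :: "nat \<Rightarrow> mpmat \<Rightarrow> mpmat \<Rightarrow> bool" where
  "mp_inverse n P Q \<longleftrightarrow> mp_wf n P \<and> mp_wf n Q \<and>
     mp_mat_eq n (mp_mult n P Q) mp_id \<and> mp_mat_eq n (mp_mult n Q P) mp_id"

definition mp_similar :: "nat \<Rightarrow> mpmat \<Rightarrow> mpmat \<Rightarrow> bool" where
  "mp_similar n A B \<longleftrightarrow>
     (\<exists>P Q. mp_inverse n P Q \<and> mp_mat_eq n B (mp_mult n (mp_mult n Q A) P))"

definition pseudo_diagonal :: "nat \<Rightarrow> mpmat \<Rightarrow> bool" where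
  "pseudo_diagonal n D \<longleftrightarrow>
     (\<forall>i<n. \<exists>r::real. D i i = ereal r) \<and> (\<forall>i<n. \<forall>j<n. i \<noteq> j \<longrightarrow> D i j = 0)"

definition pseudo_diagonalizable :: "nat \<Rightarrow> mpmat \<Rightarrow> bool" where
  "pseudo_diagonalizable n A \<longleftrightarrow> (\<exists>D. pseudo_diagonal n D \<and> mp_similar n A D)"

definition separable :: "nat \<Rightarrow> (nat \<Rightarrow> nat \<Rightarrow> real) \<Rightarrow> bool" where
  "separable n A \<longleftrightarrow> (\<exists>u v :: nat \<Rightarrow> real. \<forall>i<n. \<forall>j<n. A i j = u i + v j)"

definition optimal_node :: "nat \<Rightarrow> (nat \<Rightarrow> nat \<Rightarrow> real) \<Rightarrow> bool" where
  "optimal_node n A \<longleftrightarrow>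
     (\<exists>k<n. \<forall>i<n. \<forall>j<n. \<forall>l<n. A i k + A k j \<ge> A i l + A l j)"

end

theory Submission
  imports Defs
begin

text \<open>An invertible max-plus matrix P is monomial: row i of P has a single finite entry
  p i, in column \<sigma> i, and its inverse has the single finite entry -p i at (\<sigma> i, i).
  Conjugating A by P therefore moves -p i + a i j + p j to position (\<sigma> i, \<sigma> j), so if the
  result is pseudo-diagonal then a i j = p i - p j for all i \<noteq> j: A differs from the separable
  matrix (p i - p j) only on the diagonal. For such A, separability and the optimal-node
  property become conditions on the diagonal alone; e.g. for n \<ge> 3 and distinct i, j, k,
  separability gives a i i + a j k = a i k + a j i, which forces a i i = 0.\<close>

lemma ereal_add_ne_minf: "(a::ereal) \<noteq> -\<infinity> \<Longrightarrow> b \<noteq> -\<infinity> \<Longrightarrow> a + b \<noteq> -\<infinity>"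
  by (cases a; cases b) auto

lemma ereal_add_eq_0_finite:
  "(a::ereal) + b = 0 \<Longrightarrow> a \<noteq> \<infinity> \<Longrightarrow> b \<noteq> \<infinity> \<Longrightarrow> a \<noteq> -\<infinity> \<and> b \<noteq> -\<infinity>"
  by (cases a; cases b) auto

lemma Max_image_eq_single:
  assumes "finite S" "x0 \<in> S" "f x0 = c" "\<And>x. x \<in> S \<Longrightarrow> x \<noteq> x0 \<Longrightarrow> f x = (-\<infinity>::ereal)"
  shows "Max (f ` S) = c"
proof (rule Max_eqI)
  show "finite (f ` S)" "c \<in> f ` S" using assms by auto
  fix y assume "y \<in> f ` S"
  then obtain x where "x \<in> S" "y = f x" by auto
  then show "y \<le> c" using assms by (cases "x = x0") auto
qed

lemma mp_mult_eq_id_diag: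
  assumes "mp_mat_eq n (mp_mult n M N) mp_id" "i < n"
  shows "\<exists>t<n. M i t + N t i = 0"
proof -
  have "Max ((\<lambda>t. M i t + N t i) ` {..<n}) \<in> (\<lambda>t. M i t + N t i) ` {..<n}"
    using assms(2) by (intro Max_in) auto
  moreover have "Max ((\<lambda>t. M i t + N t i) ` {..<n}) = 0"
    using assms unfolding mp_mat_eq_def mp_mult_def mp_id_def by auto
  ultimately show ?thesis by auto
qed

lemma mp_mult_eq_id_offdiag:
  assumes "mp_mat_eq n (mp_mult n M N) mp_id" "i < n" "j < n" "t < n" "i \<noteq> j"
  shows "M i t + N t j = -\<infinity>"
proof -
  have "M i t + N t j \<le> Max ((\<lambda>t. M i t + N t j) ` {..<n})"
    using assms(4) by (intro Max_ge) auto
  also have "\<dots> = -\<infinity>"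
    using assms unfolding mp_mat_eq_def mp_mult_def mp_id_def by auto
  finally show ?thesis by simp
qed

definition mp_monomial_pair :: "nat \<Rightarrow> mpmat \<Rightarrow> mpmat \<Rightarrow> (nat \<Rightarrow> nat) \<Rightarrow> (nat \<Rightarrow> real) \<Rightarrow> bool" where
  "mp_monomial_pair n P Q \<sigma> p \<longleftrightarrow> \<sigma> ` {..<n} \<subseteq> {..<n} \<and> inj_on \<sigma> {..<n} \<and>
     (\<forall>i<n. P i (\<sigma> i) = ereal (p i) \<and> Q (\<sigma> i) i = ereal (- p i)) \<and>
     (\<forall>i<n. \<forall>t<n. t \<noteq> \<sigma> i \<longrightarrow> P i t = -\<infinity>) \<and>
     (\<forall>i<n. \<forall>r<n. r \<noteq> i \<longrightarrow> Q (\<sigma> i) r = -\<infinity>)"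

lemma mp_inverse_monomial:
  assumes "mp_inverse n P Q"
  shows "\<exists>\<sigma> p. mp_monomial_pair n P Q \<sigma> p"
proof -
  have PQ: "mp_mat_eq n (mp_mult n P Q) mp_id" and QP: "mp_mat_eq n (mp_mult n Q P) mp_id"
    and finite_P: "\<And>i j. i < n \<Longrightarrow> j < n \<Longrightarrow> P i j \<noteq> \<infinity>"
    and finite_Q: "\<And>i j. i < n \<Longrightarrow> j < n \<Longrightarrow> Q i j \<noteq> \<infinity>"
    using assms unfolding mp_inverse_def mp_wf_def by auto
  define \<sigma> where "\<sigma> i = (SOME t. t < n \<and> P i t + Q t i = 0)" for i
  have \<sigma>: "\<sigma> i < n" "P i (\<sigma> i) + Q (\<sigma> i) i = 0" if "i < n" for i
    using someI_ex[OF mp_mult_eq_id_diag[OF PQ that]] unfolding \<sigma>_def by auto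
  have fin: "P i (\<sigma> i) \<noteq> -\<infinity>" "Q (\<sigma> i) i \<noteq> -\<infinity>" if "i < n" for i
    using ereal_add_eq_0_finite[OF \<sigma>(2)] finite_P finite_Q \<sigma>(1) that by auto
  have Q_row: "Q (\<sigma> i) r = -\<infinity>" if "i < n" "r < n" "r \<noteq> i" for i r
  proof -
    have "P i (\<sigma> i) + Q (\<sigma> i) r = -\<infinity>"
      using mp_mult_eq_id_offdiag[OF PQ that(1,2) \<sigma>(1)[OF that(1)]] that(3) by simp
    then show ?thesis using ereal_add_ne_minf fin(1)[OF that(1)] by blast
  qed
  have inj: "inj_on \<sigma> {..<n}"
  proof (rule inj_onI)
    fix i j assume "i \<in> {..<n}" "j \<in> {..<n}" "\<sigma> i = \<sigma> j"
    then show "i = j" using Q_row[of j i] fin(2)[of i] by auto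
  qed
  have P_row: "P s t = -\<infinity>" if "s < n" "t < n" "t \<noteq> \<sigma> s" for s t
  proof (rule ccontr)
    assume P_fin: "P s t \<noteq> -\<infinity>"
    obtain m where m: "m < n" "Q t m + P m t = 0" using mp_mult_eq_id_diag[OF QP \<open>t < n\<close>] by blast
    have Q_fin: "Q t m \<noteq> -\<infinity>" using ereal_add_eq_0_finite[OF m(2)] finite_P finite_Q m that by auto
    have "m = s"
    proof (rule ccontr)
      assume "m \<noteq> s"
      then have "P s t + Q t m = -\<infinity>"
        using mp_mult_eq_id_offdiag[OF PQ \<open>s < n\<close> \<open>m < n\<close> \<open>t < n\<close>] by simp
      then show False using ereal_add_ne_minf[OF P_fin Q_fin] by simp
    qed
    then have "Q t s + P s (\<sigma> s) = -\<infinity>"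
      using mp_mult_eq_id_offdiag[OF QP \<open>t < n\<close> \<sigma>(1)[OF \<open>s < n\<close>] \<open>s < n\<close>] that(3) by simp
    then show False using ereal_add_ne_minf Q_fin fin(1)[OF that(1)] \<open>m = s\<close> by blast
  qed
  define p where "p i = real_of_ereal (P i (\<sigma> i))" for i
  have P_diag: "P i (\<sigma> i) = ereal (p i)" if "i < n" for i
    using fin(1)[OF that] finite_P[OF that \<sigma>(1)[OF that]] unfolding p_def by (cases "P i (\<sigma> i)") auto
  have Q_diag: "Q (\<sigma> i) i = ereal (- p i)" if "i < n" for i
    using fin(2)[OF that] finite_Q[OF \<sigma>(1)[OF that] that] \<sigma>(2)[OF that] P_diag[OF that]
    by (cases "Q (\<sigma> i) i") auto
  have "mp_monomial_pair n P Q \<sigma> p"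
    unfolding mp_monomial_pair_def using \<sigma>(1) inj P_diag Q_diag P_row Q_row by auto
  then show ?thesis by blast
qed

lemma mp_conjugate_monomial:
  fixes A :: "nat \<Rightarrow> nat \<Rightarrow> real"
  assumes "mp_monomial_pair n P Q \<sigma> p" "i < n" "j < n"
  shows "mp_mult n (mp_mult n Q (\<lambda>i j. ereal (A i j))) P (\<sigma> i) (\<sigma> j) = ereal (- p i + A i j + p j)"
proof -
  have \<sigma>: "\<sigma> ` {..<n} \<subseteq> {..<n}" "inj_on \<sigma> {..<n}"
    and diag: "\<And>i. i < n \<Longrightarrow> P i (\<sigma> i) = ereal (p i) \<and> Q (\<sigma> i) i = ereal (- p i)"
    and P_row: "\<And>i t. i < n \<Longrightarrow> t < n \<Longrightarrow> t \<noteq> \<sigma> i \<Longrightarrow> P i t = -\<infinity>"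
    and Q_row: "\<And>i r. i < n \<Longrightarrow> r < n \<Longrightarrow> r \<noteq> i \<Longrightarrow> Q (\<sigma> i) r = -\<infinity>"
    using assms(1) unfolding mp_monomial_pair_def by auto
  have QA: "Max ((\<lambda>r. Q (\<sigma> i) r + ereal (A r s)) ` {..<n}) = ereal (- p i + A i s)" for s
    using diag Q_row \<open>i < n\<close> by (intro Max_image_eq_single[of "{..<n}" i]) auto
  have "mp_mult n (mp_mult n Q (\<lambda>i j. ereal (A i j))) P (\<sigma> i) (\<sigma> j)
      = Max ((\<lambda>s. ereal (- p i + A i s) + P s (\<sigma> j)) ` {..<n})"
    unfolding mp_mult_def QA ..
  also have "\<dots> = ereal (- p i + A i j + p j)"
  proof (rule Max_image_eq_single[of "{..<n}" j])
    fix s assume "s \<in> {..<n}" "s \<noteq> j"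
    then have "\<sigma> j \<noteq> \<sigma> s" using \<sigma>(2) \<open>j < n\<close> by (auto dest: inj_onD)
    then show "ereal (- p i + A i s) + P s (\<sigma> j) = -\<infinity>"
      using P_row \<sigma>(1) \<open>j < n\<close> \<open>s \<in> {..<n}\<close> by auto
  qed (use diag \<open>j < n\<close> in auto)
  finally show ?thesis .
qed

lemma pseudo_diagonalizable_offdiag_potential:
  fixes A :: "nat \<Rightarrow> nat \<Rightarrow> real"
  assumes "pseudo_diagonalizable n (\<lambda>i j. ereal (A i j))"
  obtains p where "\<And>i j. i < n \<Longrightarrow> j < n \<Longrightarrow> i \<noteq> j \<Longrightarrow> A i j = p i - p j"
proof -
  obtain D P Q where D: "pseudo_diagonal n D" and PQ: "mp_inverse n P Q"
    and D_eq: "mp_mat_eq n D (mp_mult n (mp_mult n Q (\<lambda>i j. ereal (A i j))) P)"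
    using assms unfolding pseudo_diagonalizable_def mp_similar_def by blast
  obtain \<sigma> p where monomial: "mp_monomial_pair n P Q \<sigma> p"
    using mp_inverse_monomial[OF PQ] by blast
  have \<sigma>: "\<sigma> ` {..<n} \<subseteq> {..<n}" "inj_on \<sigma> {..<n}"
    using monomial unfolding mp_monomial_pair_def by auto
  then have \<sigma>_lt: "\<And>i. i < n \<Longrightarrow> \<sigma> i < n" by auto
  have "A i j = p i - p j" if "i < n" "j < n" "i \<noteq> j" for i j
  proof -
    have "\<sigma> i \<noteq> \<sigma> j" using \<sigma>(2) that by (auto dest: inj_onD)
    then have "D (\<sigma> i) (\<sigma> j) = 0" using D \<sigma>_lt that unfolding pseudo_diagonal_def by auto
    moreover have "D (\<sigma> i) (\<sigma> j) = ereal (- p i + A i j + p j)"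
      using D_eq \<sigma>_lt that mp_conjugate_monomial[OF monomial that(1,2)]
      unfolding mp_mat_eq_def by auto
    ultimately show ?thesis by (simp add: zero_ereal_def)
  qed
  then show thesis by (rule that)
qed

lemma separable_2_iff_trace_zero:
  fixes A :: "nat \<Rightarrow> nat \<Rightarrow> real"
  assumes "A 0 1 = p 0 - p 1" "A 1 0 = p 1 - p 0"
  shows "separable 2 A \<longleftrightarrow> A 0 0 + A 1 1 = 0"
proof
  assume "separable 2 A"
  then obtain u v where uv: "\<forall>i<2. \<forall>j<2. A i j = u i + v j" unfolding separable_def by blast
  have "A 0 0 + A 1 1 = A 0 1 + A 1 0" using uv[rule_format, of 0 0] uv[rule_format, of 1 1]
      uv[rule_format, of 0 1] uv[rule_format, of 1 0] by simp
  then show "A 0 0 + A 1 1 = 0" using assms by simp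
next
  assume "A 0 0 + A 1 1 = 0"
  then have "\<forall>i<2. \<forall>j<2. A i j = A i 0 + (A 0 j - A 0 0)"
    using assms by (auto simp: less_2_cases_iff)
  then show "separable 2 A" unfolding separable_def by (intro exI)
qed

lemma separable_iff_diag_zero:
  fixes A :: "nat \<Rightarrow> nat \<Rightarrow> real"
  assumes "3 \<le> n" and p: "\<And>i j. i < n \<Longrightarrow> j < n \<Longrightarrow> i \<noteq> j \<Longrightarrow> A i j = p i - p j"
  shows "separable n A \<longleftrightarrow> (\<forall>i<n. A i i = 0)"
proof
  assume "separable n A"
  then obtain u v where uv: "\<forall>i<n. \<forall>j<n. A i j = u i + v j" unfolding separable_def by blast
  show "\<forall>i<n. A i i = 0"
  proof (intro allI impI)
    fix i assume "i < n"
    define j where "j = (if i = 0 then 1 else 0 :: nat)"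
    define k where "k = (if i = 2 then 1 else 2 :: nat)"
    have jk: "j < n" "k < n" "j \<noteq> i" "k \<noteq> i" "j \<noteq> k"
      using \<open>3 \<le> n\<close> unfolding j_def k_def by auto
    have "A i i + A j k = A i k + A j i" using uv \<open>i < n\<close> jk by simp
    then show "A i i = 0" using p[of j k] p[of i k] p[of j i] \<open>i < n\<close> jk by simp
  qed
next
  assume "\<forall>i<n. A i i = 0"
  then have "\<forall>i<n. \<forall>j<n. A i j = p i + - p j" using p by fastforce
  then show "separable n A" unfolding separable_def by (intro exI)
qed

lemma optimal_node_iff_diag:
  fixes A :: "nat \<Rightarrow> nat \<Rightarrow> real"
  assumes "2 \<le> n" and p: "\<And>i j. i < n \<Longrightarrow> j < n \<Longrightarrow> i \<noteq> j \<Longrightarrow> A i j = p i - p j"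
  shows "optimal_node n A \<longleftrightarrow> (\<exists>k<n. A k k \<ge> 0 \<and> (\<forall>i<n. i \<noteq> k \<longrightarrow> A i i \<le> 0))"
proof
  assume "optimal_node n A"
  then obtain k where k: "k < n" and opt: "\<And>i j l. i < n \<Longrightarrow> j < n \<Longrightarrow> l < n \<Longrightarrow> A i k + A k j \<ge> A i l + A l j"
    unfolding optimal_node_def by blast
  define l where "l = (if k = 0 then 1 else 0 :: nat)"
  have l: "l < n" "l \<noteq> k" using \<open>2 \<le> n\<close> unfolding l_def by auto
  have "A k k \<ge> 0" using opt[of k k l] p[of k l] p[of l k] k l by simp
  moreover have "A i i \<le> 0" if "i < n" "i \<noteq> k" for i
    using opt[of i i i] p[of k i] p[of i k] k that by simp
  ultimately show "\<exists>k<n. A k k \<ge> 0 \<and> (\<forall>i<n. i \<noteq> k \<longrightarrow> A i i \<le> 0)" using k by blast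
next
  assume "\<exists>k<n. A k k \<ge> 0 \<and> (\<forall>i<n. i \<noteq> k \<longrightarrow> A i i \<le> 0)"
  then obtain k where k: "k < n" "A k k \<ge> 0" "\<And>i. i < n \<Longrightarrow> i \<noteq> k \<Longrightarrow> A i i \<le> 0" by blast
  define C where "C i j = (if i = j then A i i else 0)" for i j
  have A_C: "A i j = p i - p j + C i j" if "i < n" "j < n" for i j
    using p[OF that] unfolding C_def by auto
  have "\<forall>i<n. \<forall>j<n. \<forall>l<n. A i k + A k j \<ge> A i l + A l j"
  proof (intro allI impI)
    fix i j l assume "i < n" "j < n" "l < n"
    show "A i k + A k j \<ge> A i l + A l j"
    proof (cases "l = k")
      case False
      have "C i k + C k j \<ge> 0" "C i l + C l j \<le> 0"
        using k \<open>i < n\<close> \<open>j < n\<close> \<open>l < n\<close> False unfolding C_def by auto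
      then show ?thesis using A_C[of i k] A_C[of k j] A_C[of i l] A_C[of l j] k(1)
          \<open>i < n\<close> \<open>j < n\<close> \<open>l < n\<close> by simp
    qed simp
  qed
  then show "optimal_node n A" unfolding optimal_node_def using k(1) by blast
qed

theorem theorem4p19:
  fixes n :: nat and A :: "nat \<Rightarrow> nat \<Rightarrow> real"
  assumes "n \<ge> 2"
    and "pseudo_diagonalizable n (\<lambda>i j. ereal (A i j))"
  shows "(n = 2 \<longrightarrow> (separable n A \<longleftrightarrow> A 0 0 + A 1 1 = 0))
       \<and> (n \<ge> 3 \<longrightarrow> (separable n A \<longleftrightarrow> (\<forall>i<n. A i i = 0)))
       \<and> (optimal_node n A \<longleftrightarrow> (\<exists>k<n. A k k \<ge> 0 \<and> (\<forall>i<n. i \<noteq> k \<longrightarrow> A i i \<le> 0)))"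
proof -
  obtain p where p: "\<And>i j. i < n \<Longrightarrow> j < n \<Longrightarrow> i \<noteq> j \<Longrightarrow> A i j = p i - p j"
    using pseudo_diagonalizable_offdiag_potential[OF assms(2)] by blast
  show ?thesis
  proof (intro conjI impI)
    assume "n = 2"
    then show "separable n A \<longleftrightarrow> A 0 0 + A 1 1 = 0"
      using separable_2_iff_trace_zero[of A p] p[of 0 1] p[of 1 0] by simp
  next
    assume "3 \<le> n"
    then show "separable n A \<longleftrightarrow> (\<forall>i<n. A i i = 0)"
      by (rule separable_iff_diag_zero[where p = p, OF _ p])
  next
    show "optimal_node n A \<longleftrightarrow> (\<exists>k<n. A k k \<ge> 0 \<and> (\<forall>i<n. i \<noteq> k \<longrightarrow> A i i \<le> 0))"
      by (rule optimal_node_iff_diag[where p = p, OF assms(1) p])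
  qed
qed

end
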